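(* For $n\ge1$ let $\mathbb{T}_n$ be $\mathbb{C}^n$ with basis $e_1,\dots,e_n$ and product $(a\cdot b)^i=\sum_{k=1}^i a^k b^{i-k+1}$, i.e. $e_i\cdot e_j=e_{i+j-1}$ if $i+j-1\le n$ and $e_i\cdot e_j=0$ otherwise. Then for every $n$, $\mathbb{T}_n$ is an associative Novikov algebra. Moreover: (i) a symmetric bilinear form $g=(g_{ij})$ on $\mathbb{T}_n$ satisfies $g(a\cdot b,c)=g(a,c\cdot b)$ for all $a,b,c$ if and only if $g_{ij}=g_{1,i+j-1}$ when $1\le i+j-1\le n$ and $g_{ij}=0$ otherwise; such a form is nondegenerate if $g_{1n}\neq0$; (ii) there is no nonzero skew-symmetric bilinear form $f$ on $\mathbb{T}_n$ satisfying both $f(a\cdot b,c)=f(a,c\cdot b)$ and $f(a\cdot b,c)+f(b\cdot c,a)+f(c\cdot a,b)=0$ for all $a,b,c\in\mathbb{T}_n$.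
   Context: A Novikov algebra is a complex vector space with a bilinear product $\cdot$ satisfying $(a\cdot b)\cdot c=(a\cdot c)\cdot b$ and $(a\cdot b)\cdot c-a\cdot(b\cdot c)=(b\cdot a)\cdot c-b\cdot(a\cdot c)$ for all $a,b,c$. For a bilinear form $g$, $g_{ij}=g(e_i,e_j)$. *)

theory Defs
  imports Complex_Main
begin

text \<open>The algebra T_n: vectors of C^n are represented as functions nat => complex
  with coordinates indexed by 1..n and vanishing outside {1..n}.\<close>

definition inT :: "nat \<Rightarrow> (nat \<Rightarrow> complex) \<Rightarrow> bool" where
  "inT n a \<longleftrightarrow> (\<forall>i. i \<notin> {1..n} \<longrightarrow> a i = 0)"

definition tprod :: "nat \<Rightarrow> (nat \<Rightarrow> complex) \<Rightarrow> (nat \<Rightarrow> complex) \<Rightarrow> (nat \<Rightarrow> complex)" where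
  "tprod n a b = (\<lambda>i. if i \<in> {1..n} then (\<Sum>k=1..i. a k * b (i - k + 1)) else 0)"

definition bform :: "nat \<Rightarrow> (nat \<Rightarrow> nat \<Rightarrow> complex) \<Rightarrow> (nat \<Rightarrow> complex) \<Rightarrow> (nat \<Rightarrow> complex) \<Rightarrow> complex" where
  "bform n g a b = (\<Sum>i=1..n. \<Sum>j=1..n. a i * g i j * b j)"

definition sym_form :: "nat \<Rightarrow> (nat \<Rightarrow> nat \<Rightarrow> complex) \<Rightarrow> bool" where
  "sym_form n g \<longleftrightarrow> (\<forall>i\<in>{1..n}. \<forall>j\<in>{1..n}. g i j = g j i)"

definition skew_form :: "nat \<Rightarrow> (nat \<Rightarrow> nat \<Rightarrow> complex) \<Rightarrow> bool" where
  "skew_form n g \<longleftrightarrow> (\<forall>i\<in>{1..n}. \<forall>j\<in>{1..n}. g i j = - g j i)"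

definition nondegenerate :: "nat \<Rightarrow> (nat \<Rightarrow> nat \<Rightarrow> complex) \<Rightarrow> bool" where
  "nondegenerate n g \<longleftrightarrow>
     (\<forall>a. inT n a \<longrightarrow> (\<forall>b. inT n b \<longrightarrow> bform n g a b = 0) \<longrightarrow> a = (\<lambda>_. 0))"

definition invariant :: "nat \<Rightarrow> (nat \<Rightarrow> nat \<Rightarrow> complex) \<Rightarrow> bool" where
  "invariant n g \<longleftrightarrow> (\<forall>a b c. inT n a \<longrightarrow> inT n b \<longrightarrow> inT n c \<longrightarrow>
      bform n g (tprod n a b) c = bform n g a (tprod n c b))"

definition cyclic :: "nat \<Rightarrow> (nat \<Rightarrow> nat \<Rightarrow> complex) \<Rightarrow> bool" where
  "cyclic n f \<longleftrightarrow> (\<forall>a b c. inT n a \<longrightarrow> inT n b \<longrightarrow> inT n c \<longrightarrow>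
      bform n f (tprod n a b) c + bform n f (tprod n b c) a + bform n f (tprod n c a) b = 0)"

end

theory Submission
  imports Defs "HOL-Computational_Algebra.Formal_Power_Series"
begin

text \<open>Sending a vector a to the power series with coefficients a(1), a(2), ... identifies
  the product of T_n with multiplication in the truncated polynomial ring C[t]/(t^n), which is
  commutative and associative, hence Novikov. An invariant form satisfies
  g(e_i, e_j) = g(e_1 e_i, e_j) = g(e_1, e_j e_i), so it is a Hankel matrix determined by the
  functional g(e_1, -); conversely g(a, b) = g(e_1, a b) is invariant by associativity and
  commutativity. If a has lowest nonzero coefficient at t^d, then g(a, t^(n-1-d)) = a_d g_1n, which
  gives nondegeneracy. Finally, invariant forms are symmetric, so a skew-symmetric invariant form
  vanishes, without using the cyclic condition.\<close>

definition fps_of :: "(nat \<Rightarrow> complex) \<Rightarrow> complex fps" where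
  "fps_of a = Abs_fps (\<lambda>k. a (Suc k))"

definition std_basis :: "nat \<Rightarrow> nat \<Rightarrow> complex" where
  "std_basis k = (\<lambda>i. if i = k then 1 else 0)"

lemma fps_of_nth [simp]: "fps_nth (fps_of a) k = a (Suc k)"
  by (simp add: fps_of_def)

lemma tprod_0 [simp]: "tprod n a b 0 = 0"
  by (simp add: tprod_def)

lemma tprod_Suc: "tprod n a b (Suc k) = (if k < n then fps_nth (fps_of a * fps_of b) k else 0)"
proof -
  have "(\<Sum>i=Suc 0..Suc k. a i * b (Suc k - i + 1)) = (\<Sum>i=0..k. a (Suc i) * b (Suc k - Suc i + 1))"
    by (rule sum.shift_bounds_cl_Suc_ivl)
  also have "\<dots> = (\<Sum>i=0..k. a (Suc i) * b (Suc (k - i)))"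
    by (rule sum.cong) auto
  finally show ?thesis
    by (simp add: tprod_def fps_mult_nth)
qed

lemma inT_tprod: "inT n (tprod n a b)"
  by (simp add: inT_def tprod_def)

lemma tprod_ext:
  assumes "\<And>k. k < n \<Longrightarrow> fps_nth (fps_of a * fps_of b) k = fps_nth (fps_of c * fps_of d) k"
  shows "tprod n a b = tprod n c d"
proof
  fix i show "tprod n a b i = tprod n c d i"
    using assms by (cases i) (simp_all add: tprod_Suc)
qed

lemma tprod_commute: "tprod n a b = tprod n b a"
  by (rule tprod_ext) (simp add: mult.commute)

lemma fps_mult_nth_cong:
  fixes f f' g :: "'a::comm_semiring_1 fps"
  assumes "\<And>i. i \<le> k \<Longrightarrow> fps_nth f i = fps_nth f' i"
  shows "fps_nth (f * g) k = fps_nth (f' * g) k"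
  using assms by (simp add: fps_mult_nth)

lemma fps_of_tprod_mult_nth:
  "k < n \<Longrightarrow> fps_nth (fps_of (tprod n a b) * f) k = fps_nth (fps_of a * fps_of b * f) k"
  by (rule fps_mult_nth_cong) (simp add: tprod_Suc)

lemma tprod_assoc: "tprod n (tprod n a b) c = tprod n a (tprod n b c)"
proof (rule tprod_ext)
  fix k assume "k < n"
  then have "fps_nth (fps_of (tprod n a b) * fps_of c) k = fps_nth (fps_of a * fps_of b * fps_of c) k"
    by (rule fps_of_tprod_mult_nth)
  also have "\<dots> = fps_nth (fps_of b * fps_of c * fps_of a) k"
    by (simp add: ac_simps)
  also have "\<dots> = fps_nth (fps_of (tprod n b c) * fps_of a) k"
    using \<open>k < n\<close> by (rule fps_of_tprod_mult_nth [symmetric])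
  finally show "fps_nth (fps_of (tprod n a b) * fps_of c) k = fps_nth (fps_of a * fps_of (tprod n b c)) k"
    by (simp add: mult.commute)
qed

lemma inT_std_basis: "k \<in> {1..n} \<Longrightarrow> inT n (std_basis k)"
  by (auto simp: inT_def std_basis_def)

lemma fps_of_std_basis: "fps_of (std_basis (Suc m)) = fps_X ^ m"
  by (rule fps_ext) (simp add: std_basis_def)

lemma tprod_std_basis:
  "tprod n (std_basis (Suc p)) (std_basis (Suc q)) =
     (if p + q < n then std_basis (Suc (p + q)) else (\<lambda>_. 0))"
proof
  fix i show "tprod n (std_basis (Suc p)) (std_basis (Suc q)) i =
      (if p + q < n then std_basis (Suc (p + q)) else (\<lambda>_. 0)) i"
    by (cases i)
      (simp_all add: tprod_Suc fps_of_std_basis power_add [symmetric] std_basis_def [of "Suc (p + q)"])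
qed

lemma bform_std_basis:
  assumes "i \<in> {1..n}" "j \<in> {1..n}"
  shows "bform n g (std_basis i) (std_basis j) = g i j"
  using assms
  by (simp add: bform_def std_basis_def if_distrib [of "\<lambda>x. x * _"] if_distrib [of "\<lambda>x. _ * x"]
      cong: if_cong)

lemma bform_zero_right: "bform n g a (\<lambda>_. 0) = 0"
  by (simp add: bform_def)

lemma bform_conv_fps:
  "bform n g a b =
     (\<Sum>i<n. \<Sum>j<n. fps_nth (fps_of a) i * g (Suc i) (Suc j) * fps_nth (fps_of b) j)"
  by (simp add: bform_def sum.atLeast1_atMost_eq)

lemma sum_triangle_fps_mult:
  fixes f g :: "'a::comm_semiring_1 fps"
  shows "(\<Sum>(i, j)\<in>{(i, j). i + j < n}. fps_nth f i * fps_nth g j * h (i + j)) =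
     (\<Sum>k<n. fps_nth (f * g) k * h k)"
proof -
  have "(\<Sum>i\<le>k. fps_nth f i * fps_nth g (k - i) * h (i + (k - i))) = fps_nth (f * g) k * h k" for k
    by (simp add: fps_mult_nth atLeast0AtMost flip: sum_distrib_right)
  then show ?thesis
    by (simp add: sum.triangle_reindex)
qed

definition hankel_form :: "nat \<Rightarrow> (nat \<Rightarrow> nat \<Rightarrow> complex) \<Rightarrow> bool" where
  "hankel_form n g \<longleftrightarrow>
     (\<forall>i\<in>{1..n}. \<forall>j\<in>{1..n}.
        g i j = (if 1 \<le> i + j - 1 \<and> i + j - 1 \<le> n then g 1 (i + j - 1) else 0))"

lemma hankel_formD:
  assumes "hankel_form n g" "i \<in> {1..n}" "j \<in> {1..n}"
  shows "g i j = (if i + j - 1 \<le> n then g 1 (i + j - 1) else 0)"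
proof -
  have "g i j = (if 1 \<le> i + j - 1 \<and> i + j - 1 \<le> n then g 1 (i + j - 1) else 0)"
    using assms unfolding hankel_form_def by blast
  moreover have "1 \<le> i + j - 1"
    using assms(2,3) by auto
  ultimately show ?thesis
    by simp
qed

lemma hankel_form_Suc:
  assumes "hankel_form n g" "p < n" "q < n"
  shows "g (Suc p) (Suc q) = (if p + q < n then g 1 (Suc (p + q)) else 0)"
  using hankel_formD [OF assms(1), of "Suc p" "Suc q"] assms(2,3) by simp

lemma hankel_formI:
  assumes "\<And>p q. p < n \<Longrightarrow> q < n \<Longrightarrow>
    g (Suc p) (Suc q) = (if p + q < n then g 1 (Suc (p + q)) else 0)"
  shows "hankel_form n g"
  unfolding hankel_form_def
proof (intro ballI)
  fix i j assume "i \<in> {1..n}" "j \<in> {1..n}"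
  then obtain p q where "i = Suc p" "j = Suc q" "p < n" "q < n"
    by (cases i; cases j) auto
  moreover have "g (Suc p) (Suc q) = (if p + q < n then g 1 (Suc (p + q)) else 0)"
    using assms \<open>p < n\<close> \<open>q < n\<close> by blast
  ultimately show "g i j = (if 1 \<le> i + j - 1 \<and> i + j - 1 \<le> n then g 1 (i + j - 1) else 0)"
    by (simp only:) (simp add: Suc_le_eq)
qed

lemma hankel_form_sym_form:
  assumes "hankel_form n g"
  shows "sym_form n g"
  unfolding sym_form_def
proof (intro ballI)
  fix i j assume "i \<in> {1..n}" "j \<in> {1..n}"
  then show "g i j = g j i"
    using hankel_formD [OF assms, of i j] hankel_formD [OF assms, of j i] by (simp add: add.commute)
qed

lemma invariant_imp_hankel_form:
  assumes "invariant n g"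
  shows "hankel_form n g"
proof (rule hankel_formI)
  fix p q assume "p < n" "q < n"
  then have "g (Suc p) (Suc q) = bform n g (tprod n (std_basis 1) (std_basis (Suc p))) (std_basis (Suc q))"
    by (simp add: tprod_std_basis bform_std_basis)
  also have "\<dots> = bform n g (std_basis 1) (tprod n (std_basis (Suc q)) (std_basis (Suc p)))"
    using assms \<open>p < n\<close> \<open>q < n\<close> by (simp add: invariant_def inT_std_basis)
  also have "\<dots> = (if p + q < n then g 1 (Suc (p + q)) else 0)"
    using \<open>p < n\<close> by (simp add: tprod_std_basis bform_std_basis bform_zero_right add.commute)
  finally show "g (Suc p) (Suc q) = (if p + q < n then g 1 (Suc (p + q)) else 0)" .
qed

lemma bform_hankel_form:
  assumes "hankel_form n g"
  shows "bform n g a b = (\<Sum>k<n. tprod n a b (Suc k) * g 1 (Suc k))"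
proof -
  let ?A = "fps_of a" and ?B = "fps_of b"
  \<comment> \<open>hankel_form_Suc loops as a simp rule, since g 1 also matches g (Suc p) (Suc q).\<close>
  have entry: "fps_nth ?A i * g (Suc i) (Suc j) * fps_nth ?B j =
      (if i + j < n then fps_nth ?A i * fps_nth ?B j * g 1 (Suc (i + j)) else 0)"
    if "i < n" "j < n" for i j
    using hankel_form_Suc [OF assms that] by simp
  have "bform n g a b = (\<Sum>(i, j)\<in>{..<n} \<times> {..<n}.
      if i + j < n then fps_nth ?A i * fps_nth ?B j * g 1 (Suc (i + j)) else 0)"
    unfolding bform_conv_fps sum.cartesian_product
    by (intro sum.cong refl) (auto simp del: fps_of_nth simp: entry)
  also have "\<dots> = (\<Sum>(i, j)\<in>{(i, j). i + j < n}. fps_nth ?A i * fps_nth ?B j * g 1 (Suc (i + j)))"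
    by (simp add: sum.inter_filter [symmetric] case_prod_unfold) (intro sum.cong; auto)
  also have "\<dots> = (\<Sum>k<n. fps_nth (?A * ?B) k * g 1 (Suc k))"
    by (rule sum_triangle_fps_mult)
  finally show ?thesis
    by (simp add: tprod_Suc)
qed

lemma hankel_form_imp_invariant:
  assumes "hankel_form n g"
  shows "invariant n g"
  unfolding invariant_def
proof (intro allI impI)
  fix a b c
  have "tprod n (tprod n a b) c = tprod n a (tprod n c b)"
    by (simp add: tprod_assoc tprod_commute [of n c b])
  then show "bform n g (tprod n a b) c = bform n g a (tprod n c b)"
    by (simp add: bform_hankel_form [OF assms])
qed

lemma invariant_iff_hankel_form: "invariant n g \<longleftrightarrow> hankel_form n g"
  using invariant_imp_hankel_form hankel_form_imp_invariant by blast

lemma fps_of_eq_0_iff: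
  assumes "inT n a"
  shows "fps_of a = 0 \<longleftrightarrow> a = (\<lambda>_. 0)"
proof
  assume "fps_of a = 0"
  show "a = (\<lambda>_. 0)"
  proof
    fix i show "a i = 0"
      using assms \<open>fps_of a = 0\<close> by (cases i) (auto simp: inT_def fps_eq_iff)
  qed
qed (simp add: fps_eq_iff)

lemma hankel_form_nondegenerate:
  assumes hankel: "hankel_form n g" and corner: "g 1 n \<noteq> 0"
  shows "nondegenerate n g"
  unfolding nondegenerate_def
proof (intro allI impI)
  fix a assume a: "inT n a" and orth: "\<forall>b. inT n b \<longrightarrow> bform n g a b = 0"
  let ?A = "fps_of a"
  have "?A = 0"
  proof (rule ccontr)
    assume "?A \<noteq> 0"
    define d where "d = subdegree ?A"
    have lead: "fps_nth ?A d \<noteq> 0"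
      unfolding d_def using \<open>?A \<noteq> 0\<close> by (rule nth_subdegree_nonzero)
    then have "Suc d \<in> {1..n}"
      using a unfolding inT_def by auto
    then obtain q where n: "n = Suc (d + q)"
      by (auto dest: le_Suc_ex)
    have "bform n g a (std_basis (Suc q)) = (\<Sum>k<n. fps_nth (?A * fps_X ^ q) k * g 1 (Suc k))"
      unfolding bform_hankel_form [OF hankel]
      by (intro sum.cong refl) (simp add: tprod_Suc fps_of_std_basis del: fps_of_nth)
    also have "\<dots> = fps_nth ?A d * g 1 n"
    proof -
      have "fps_nth (?A * fps_X ^ q) k = 0" if "k < d + q" for k
        using that nth_less_subdegree_zero [of "k - q" ?A]
        by (simp add: fps_X_power_mult_right_nth d_def del: fps_of_nth)
      then have "(\<Sum>k<d + q. fps_nth (?A * fps_X ^ q) k * g 1 (Suc k)) = 0"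
        by (intro sum.neutral) simp
      then show ?thesis
        by (simp add: n fps_X_power_mult_right_nth del: fps_of_nth)
    qed
    finally have "bform n g a (std_basis (Suc q)) = fps_nth ?A d * g 1 n" .
    moreover have "bform n g a (std_basis (Suc q)) = 0"
      using orth inT_std_basis [of "Suc q" n] n by simp
    ultimately show False
      using lead corner by simp
  qed
  then show "a = (\<lambda>_. 0)"
    using fps_of_eq_0_iff [OF a] by blast
qed

lemma invariant_skew_form_eq_0:
  assumes "invariant n f" "skew_form n f" "i \<in> {1..n}" "j \<in> {1..n}"
  shows "f i j = 0"
proof -
  have "f i j = f j i"
    using hankel_form_sym_form assms unfolding invariant_iff_hankel_form sym_form_def by blast
  moreover have "f i j = - f j i"
    using assms unfolding skew_form_def by blast
  ultimately show ?thesis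
    by simp
qed

theorem proposition5p1:
  fixes n :: nat
  assumes "n \<ge> 1"
  shows
   "(\<forall>a b. inT n a \<longrightarrow> inT n b \<longrightarrow> inT n (tprod n a b))
    \<and> (\<forall>a b c. inT n a \<longrightarrow> inT n b \<longrightarrow> inT n c \<longrightarrow>
         tprod n (tprod n a b) c = tprod n a (tprod n b c))
    \<and> (\<forall>a b c. inT n a \<longrightarrow> inT n b \<longrightarrow> inT n c \<longrightarrow>
         tprod n (tprod n a b) c = tprod n (tprod n a c) b)
    \<and> (\<forall>a b c. inT n a \<longrightarrow> inT n b \<longrightarrow> inT n c \<longrightarrow>
         (\<lambda>i. tprod n (tprod n a b) c i - tprod n a (tprod n b c) i) =
         (\<lambda>i. tprod n (tprod n b a) c i - tprod n b (tprod n a c) i))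
    \<and> (\<forall>g. sym_form n g \<longrightarrow>
         (invariant n g \<longleftrightarrow>
           (\<forall>i\<in>{1..n}. \<forall>j\<in>{1..n}.
              g i j = (if 1 \<le> i + j - 1 \<and> i + j - 1 \<le> n then g 1 (i + j - 1) else 0))))
    \<and> (\<forall>g. sym_form n g \<longrightarrow> invariant n g \<longrightarrow> g 1 n \<noteq> 0 \<longrightarrow> nondegenerate n g)
    \<and> (\<forall>f. skew_form n f \<longrightarrow> invariant n f \<longrightarrow> cyclic n f \<longrightarrow>
         (\<forall>i\<in>{1..n}. \<forall>j\<in>{1..n}. f i j = 0))"
proof (intro conjI allI impI)
  fix a b c
  show "inT n (tprod n a b)"
    by (rule inT_tprod)
  show "tprod n (tprod n a b) c = tprod n a (tprod n b c)"
    by (rule tprod_assoc)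
  show "tprod n (tprod n a b) c = tprod n (tprod n a c) b"
    by (simp add: tprod_assoc tprod_commute [of n c b])
  show "(\<lambda>i. tprod n (tprod n a b) c i - tprod n a (tprod n b c) i) =
      (\<lambda>i. tprod n (tprod n b a) c i - tprod n b (tprod n a c) i)"
    by (simp add: tprod_assoc)
next
  fix g
  show "invariant n g \<longleftrightarrow> (\<forall>i\<in>{1..n}. \<forall>j\<in>{1..n}.
      g i j = (if 1 \<le> i + j - 1 \<and> i + j - 1 \<le> n then g 1 (i + j - 1) else 0))"
    unfolding invariant_iff_hankel_form hankel_form_def ..
  assume "invariant n g" "g 1 n \<noteq> 0"
  then show "nondegenerate n g"
    by (simp add: invariant_iff_hankel_form hankel_form_nondegenerate)
next
  fix f
  assume "skew_form n f" "invariant n f"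
  then show "\<forall>i\<in>{1..n}. \<forall>j\<in>{1..n}. f i j = 0"
    using invariant_skew_form_eq_0 by blast
qed

end
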